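(* Let $\mathbb{F}$ be any field and let $n\ge 1$, $0\le k\le n$, $s\ge 0$ be integers. The number of distinct zero-patterns of $(n,k,s)$-matrices over $\mathbb{F}$ is at most $\binom{n}{k}^2\cdot n^{20ks/n}$.
   Context: An $(n,k,s)$-matrix over $\mathbb{F}$ is a matrix $M\in\mathbb{F}^{n\times n}$ of rank $k$ with exactly $s$ nonzero entries, which contains rows $R_{i_1},\dots,R_{i_k}$ and columns $C_{j_1},\dots,C_{j_k}$ such that $R_{i_1},\dots,R_{i_k}$ is a basis of the row space of $M$, $C_{j_1},\dots,C_{j_k}$ is a basis of the column space of $M$, and the total number of nonzero entries in the $2k$ vectors $R_{i_1},\dots,R_{i_k},C_{j_1},\dots,C_{j_k}$ is at most $4ks/n$. The zero-pattern of a matrix $M\in\mathbb{F}^{n\times n}$ is the matrix $Z\in\{0,*\}^{n\times n}$ with $Z_{i,j}=0$ if $M_{i,j}=0$ and $Z_{i,j}=*$ otherwise. *)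

theory Defs
  imports Jordan_Normal_Form.DL_Rank
begin

context vec_space
begin

text \<open>The rows of M indexed by the (distinct) indices in I form a basis of the row space of M.
  Here the ambient dimension n of the locale is the number of columns of M.\<close>
definition is_row_basis :: "'a mat \<Rightarrow> nat set \<Rightarrow> bool" where
  "is_row_basis M I \<longleftrightarrow> I \<subseteq> {..<dim_row M} \<and> inj_on (row M) I
     \<and> lin_indpt (row M ` I) \<and> span (row M ` I) = row_space M"

text \<open>The columns of M indexed by J form a basis of the column space of M.
  Here the ambient dimension n of the locale is the number of rows of M.\<close>
definition is_col_basis :: "'a mat \<Rightarrow> nat set \<Rightarrow> bool" where
  "is_col_basis M J \<longleftrightarrow> J \<subseteq> {..<dim_col M} \<and> inj_on (col M) J
     \<and> lin_indpt (col M ` J) \<and> span (col M ` J) = col_space M"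

end

definition nnz_vec :: "'a::zero vec \<Rightarrow> nat" where
  "nnz_vec v = card {i. i < dim_vec v \<and> v $ i \<noteq> 0}"

definition nnz_mat :: "'a::zero mat \<Rightarrow> nat" where
  "nnz_mat M = card {(i, j). i < dim_row M \<and> j < dim_col M \<and> M $$ (i, j) \<noteq> 0}"

definition nks_matrix :: "nat \<Rightarrow> nat \<Rightarrow> nat \<Rightarrow> 'a::field mat \<Rightarrow> bool" where
  "nks_matrix n k s M \<longleftrightarrow>
     M \<in> carrier_mat n n \<and> vec_space.rank n M = k \<and> nnz_mat M = s \<and>
     (\<exists>I J. card I = k \<and> card J = k \<and>
        vec_space.is_row_basis n M I \<and> vec_space.is_col_basis n M J \<and>
        real ((\<Sum>i\<in>I. nnz_vec (row M i)) + (\<Sum>j\<in>J. nnz_vec (col M j)))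
          \<le> 4 * real k * real s / real n)"

text \<open>Zero pattern: True encodes *, False encodes 0.\<close>
definition zero_pattern :: "'a::zero mat \<Rightarrow> bool mat" where
  "zero_pattern M = mat (dim_row M) (dim_col M) (\<lambda>(i, j). M $$ (i, j) \<noteq> 0)"

end

theory Submission
  imports Defs "HOL-Library.Function_Algebras"
begin

(*
  Let I and J index row and column bases of an (n,k,s)-matrix M, enumerated by r and c. The k x k
  submatrix A on I x J is nonsingular, while the bordered (k+1)-minor through any entry (i,j)
  vanishes because row i depends on the rows in I. Expanding that minor along its last row gives
  M(i,j) det A = - det B(i,j), where B(i,j) is the minor with its corner entry replaced by 0. Hence
  M(i,j) is nonzero iff det B(i,j) is, and det B(i,j) is a polynomial of degree k + 1 in the entries
  of M in the rows I and the columns J; by sparsity at most T = 4ks/n of these entries are nonzero.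

  Fix I, J and a set U of at most T such positions. For every possible support S (of size s) the
  product of det B(p) over p in S is nonzero exactly at the matrices with support S, so these
  products are linearly independent functions of the U entries, of degree at most s (k + 1) in each
  variable. There are thus at most (s (k + 1) + 1)^|U| supports. Summing over the (n choose k)^2
  choices of (I, J) and the at most (2kn + 1)^T choices of U gives the bound when 10k < n; otherwise
  the trivial bound n^(2s) already suffices.
*)

section \<open>Minors determined by row and column bases\<close>

lemma row_basis_lincomb:
  fixes M :: "'a::field mat"
  assumes M: "M \<in> carrier_mat m n" and B: "vec_space.is_row_basis n M I" and i: "i < m"
  obtains c where "\<And>j. j < n \<Longrightarrow> M $$ (i,j) = (\<Sum>i'\<in>I. c i' * M $$ (i',j))"
proof -
  interpret vec_space "TYPE('a)" n .
  from B have I: "I \<subseteq> {..<m}" and inj: "inj_on (row M) I" and sp: "span (row M ` I) = row_space M"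
    using M unfolding is_row_basis_def by auto
  have Rc: "row M ` I \<subseteq> carrier_vec n" using M by auto
  have "row M i \<in> set (rows M)" "set (rows M) \<subseteq> carrier_vec n"
    using M i unfolding rows_def by auto
  then have "row M i \<in> row_space M" unfolding row_space_def using in_own_span by blast
  then have "row M i \<in> span (row M ` I)" using sp by simp
  then obtain a where a: "lincomb a (row M ` I) = row M i"
    using finite_in_span[OF finite_imageI Rc] finite_subset[OF I] by blast
  have "M $$ (i,j) = (\<Sum>i'\<in>I. (a \<circ> row M) i' * M $$ (i',j))" if j: "j < n" for j
  proof -
    have "M $$ (i,j) = lincomb a (row M ` I) $ j" using M i j by (simp add: a)
    also have "\<dots> = (\<Sum>x\<in>row M ` I. a x * x $ j)" by (rule lincomb_index[OF j Rc])
    also have "\<dots> = (\<Sum>i'\<in>I. (a \<circ> row M) i' * M $$ (i',j))"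
      using I M j by (simp add: sum.reindex[OF inj] subset_iff)
    finally show ?thesis .
  qed
  then show thesis by (rule that)
qed

lemma col_basis_lincomb_zero:
  fixes M :: "'a::field mat"
  assumes M: "M \<in> carrier_mat m n" and B: "vec_space.is_col_basis m M J"
    and zero: "\<And>i. i < m \<Longrightarrow> (\<Sum>j\<in>J. d j * M $$ (i,j)) = 0" and j0: "j0 \<in> J"
  shows "d j0 = 0"
proof (rule ccontr)
  assume nz: "d j0 \<noteq> 0"
  interpret vec_space "TYPE('a)" m .
  from B have J: "J \<subseteq> {..<n}" and inj: "inj_on (col M) J" and li: "lin_indpt (col M ` J)"
    using M unfolding is_col_basis_def by auto
  have finJ: "finite J" using J finite_subset by blast
  have Cc: "col M ` J \<subseteq> carrier_vec m" using M by auto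
  define a where "a = d \<circ> the_inv_into J (col M)"
  have a: "a (col M j) = d j" if "j \<in> J" for j
    unfolding a_def using the_inv_into_f_f[OF inj that] by simp
  have "lincomb a (col M ` J) = 0\<^sub>v m"
  proof (rule eq_vecI)
    fix i assume "i < dim_vec (0\<^sub>v m)"
    then have i: "i < m" by simp
    have "lincomb a (col M ` J) $ i = (\<Sum>j\<in>J. a (col M j) * col M j $ i)"
      by (simp add: lincomb_index[OF i Cc] sum.reindex[OF inj])
    also have "\<dots> = (\<Sum>j\<in>J. d j * M $$ (i,j))" using J M i a by (intro sum.cong) auto
    finally show "lincomb a (col M ` J) $ i = 0\<^sub>v m $ i" using zero i by simp
  qed (use lincomb_dim[OF finite_imageI[OF finJ] Cc] in simp)
  then have "lin_dep (col M ` J)" unfolding lin_dep_def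
    using j0 nz a finJ by (intro exI[of _ "col M ` J"] exI[of _ a] exI[of _ "col M j0"]) auto
  with li show False by simp
qed

definition submat :: "nat \<Rightarrow> (nat \<Rightarrow> nat) \<Rightarrow> (nat \<Rightarrow> nat) \<Rightarrow> 'a mat \<Rightarrow> 'a mat" where
  "submat k r c M = mat k k (\<lambda>(a,b). M $$ (r a, c b))"

definition bordered_minor :: "nat \<Rightarrow> (nat \<Rightarrow> nat) \<Rightarrow> (nat \<Rightarrow> nat) \<Rightarrow> nat \<Rightarrow> nat \<Rightarrow> 'a::zero mat \<Rightarrow> 'a mat" where
  "bordered_minor k r c i j M =
     mat (Suc k) (Suc k) (\<lambda>(a,b). if a = k \<and> b = k then 0 else M $$ ((r(k := i)) a, (c(k := j)) b))"

lemma submat_carrier [simp]: "submat k r c M \<in> carrier_mat k k"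
  by (simp add: submat_def)

lemma bordered_minor_carrier [simp]: "bordered_minor k r c i j M \<in> carrier_mat (Suc k) (Suc k)"
  by (simp add: bordered_minor_def)

lemma det_submat_border:
  fixes M :: "'a::comm_ring_1 mat"
  shows "det (submat (Suc k) (r(k := i)) (c(k := j)) M)
           = det (bordered_minor k r c i j M) + M $$ (i,j) * det (submat k r c M)"
proof -
  let ?B = "submat (Suc k) (r(k := i)) (c(k := j)) M"
  let ?C = "bordered_minor k r c i j M"
  have last_row: "?B $$ (k,b) = ?C $$ (k,b)" if "b < k" for b
    using that by (simp add: submat_def bordered_minor_def)
  have "mat_delete ?B k b = mat_delete ?C k b" for b
    unfolding mat_delete_def submat_def bordered_minor_def by (rule eq_matI) auto
  then have same_cofactor: "cofactor ?B k b = cofactor ?C k b" for b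
    by (simp add: cofactor_def)
  have "mat_delete ?B k k = submat k r c M"
    unfolding mat_delete_def submat_def by (rule eq_matI) auto
  then have corner: "?B $$ (k,k) * cofactor ?B k k = M $$ (i,j) * det (submat k r c M)"
    by (simp add: cofactor_def submat_def)
  have "det ?B = (\<Sum>b<k. ?B $$ (k,b) * cofactor ?B k b) + ?B $$ (k,k) * cofactor ?B k k"
    by (simp add: laplace_expansion_row[of _ "Suc k" k])
  also have "(\<Sum>b<k. ?B $$ (k,b) * cofactor ?B k b) = (\<Sum>b<Suc k. ?C $$ (k,b) * cofactor ?C k b)"
    by (simp add: last_row same_cofactor bordered_minor_def)
  also have "\<dots> = det ?C"
    by (rule laplace_expansion_row[symmetric]) simp_all
  finally show ?thesis by (simp only: corner)
qed

lemma sum_bij_betw_lessThan: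
  assumes "bij_betw r {..<k} I"
  shows "(\<Sum>i\<in>I. g i) = (\<Sum>a<k. g (r a))"
  using assms by (metis bij_betw_def sum.reindex_cong)

lemma det_submat_row_basis_extended_zero:
  fixes M :: "'a::field mat"
  assumes M: "M \<in> carrier_mat m n" and row_basis: "vec_space.is_row_basis n M I"
    and r: "bij_betw r {..<k} I" and i: "i < m" and c: "\<And>b. b < Suc k \<Longrightarrow> c b < n"
  shows "det (submat (Suc k) (r(k := i)) c M) = 0"
proof -
  obtain coeff where coeff: "\<And>j. j < n \<Longrightarrow> M $$ (i,j) = (\<Sum>i'\<in>I. coeff i' * M $$ (i',j))"
    using row_basis_lincomb[OF M row_basis i] by blast
  let ?B = "submat (Suc k) (r(k := i)) c M"
  \<comment> \<open>The dependence of row i on the basis rows is a nonzero left null vector of the submatrix.\<close>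
  define y where "y = vec (Suc k) (\<lambda>a. if a < k then - coeff (r a) else (1::'a))"
  have y: "y \<in> carrier_vec (Suc k)" "y \<noteq> 0\<^sub>v (Suc k)"
    unfolding y_def by (auto simp: vec_eq_iff)
  have "transpose_mat ?B *\<^sub>v y = 0\<^sub>v (Suc k)"
  proof (rule eq_vecI)
    fix b assume "b < dim_vec (0\<^sub>v (Suc k))"
    then have b: "b < Suc k" by simp
    have "(transpose_mat ?B *\<^sub>v y) $ b = (\<Sum>a<Suc k. ?B $$ (a,b) * y $ a)"
      using b y by (auto simp: scalar_prod_def atLeast0LessThan submat_def intro!: sum.cong)
    also have "\<dots> = - (\<Sum>a<k. coeff (r a) * M $$ (r a, c b)) + M $$ (i, c b)"
      using b by (simp add: submat_def y_def sum_negf mult.commute)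
    also have "\<dots> = 0"
      using coeff[OF c[OF b]] by (simp add: sum_bij_betw_lessThan[OF r])
    finally show "(transpose_mat ?B *\<^sub>v y) $ b = 0\<^sub>v (Suc k) $ b" using b by simp
  qed (simp add: submat_def)
  then have "det (transpose_mat ?B) = 0"
    using det_0_iff_vec_prod_zero[of "transpose_mat ?B" "Suc k"] y by auto
  then show ?thesis by (simp add: det_transpose[OF submat_carrier])
qed

lemma det_submat_bases_nonzero:
  fixes M :: "'a::field mat"
  assumes M: "M \<in> carrier_mat m n"
    and row_basis: "vec_space.is_row_basis n M I" and col_basis: "vec_space.is_col_basis m M J"
    and r: "bij_betw r {..<k} I" and c: "bij_betw c {..<k} J"
  shows "det (submat k r c M) \<noteq> 0"
proof
  assume "det (submat k r c M) = 0"
  then obtain v where v: "v \<in> carrier_vec k" "v \<noteq> 0\<^sub>v k" "submat k r c M *\<^sub>v v = 0\<^sub>v k"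
    by (meson det_0_iff_vec_prod_zero submat_carrier)
  define d where "d j = v $ inv_into {..<k} c j" for j
  have d: "d (c b) = v $ b" if "b < k" for b
    unfolding d_def using c that by (simp add: bij_betw_def)
  have zero_on_basis: "(\<Sum>j\<in>J. d j * M $$ (r a, j)) = 0" if a: "a < k" for a
  proof -
    have "(\<Sum>j\<in>J. d j * M $$ (r a, j)) = (submat k r c M *\<^sub>v v) $ a"
      using a v(1) by (auto simp: sum_bij_betw_lessThan[OF c] d scalar_prod_def atLeast0LessThan
          submat_def intro!: sum.cong)
    then show ?thesis using v(3) a by simp
  qed
  have "(\<Sum>j\<in>J. d j * M $$ (i,j)) = 0" if i: "i < m" for i
  proof -
    obtain coeff where coeff: "\<And>j. j < n \<Longrightarrow> M $$ (i,j) = (\<Sum>i'\<in>I. coeff i' * M $$ (i',j))"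
      using row_basis_lincomb[OF M row_basis i] by blast
    have J: "J \<subseteq> {..<n}" using col_basis M unfolding vec_space.is_col_basis_def by simp
    have "(\<Sum>j\<in>J. d j * M $$ (i,j)) = (\<Sum>j\<in>J. d j * (\<Sum>i'\<in>I. coeff i' * M $$ (i',j)))"
      using coeff J by (intro sum.cong) auto
    also have "\<dots> = (\<Sum>a<k. coeff (r a) * (\<Sum>j\<in>J. d j * M $$ (r a,j)))"
      by (simp add: sum_distrib_left sum.swap[of _ J] algebra_simps sum_bij_betw_lessThan[OF r])
    finally show ?thesis using zero_on_basis by simp
  qed
  then have "v $ b = 0" if "b < k" for b
    using col_basis_lincomb_zero[OF M col_basis, of d "c b"] d[OF that] bij_betwE[OF c] that by simp
  then have "v = 0\<^sub>v k" using v(1) by (intro eq_vecI) auto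
  with v(2) show False ..
qed

lemma entry_nonzero_iff_det_bordered_minor:
  fixes M :: "'a::field mat"
  assumes M: "M \<in> carrier_mat m n"
    and row_basis: "vec_space.is_row_basis n M I" and col_basis: "vec_space.is_col_basis m M J"
    and r: "bij_betw r {..<k} I" and c: "bij_betw c {..<k} J" and i: "i < m" and j: "j < n"
  shows "M $$ (i,j) \<noteq> 0 \<longleftrightarrow> det (bordered_minor k r c i j M) \<noteq> 0"
proof -
  have "c b < n" if "b < k" for b
    using bij_betwE[OF c] col_basis M that unfolding vec_space.is_col_basis_def by auto
  then have "det (submat (Suc k) (r(k := i)) (c(k := j)) M) = 0"
    using j by (intro det_submat_row_basis_extended_zero[OF M row_basis r i]) auto
  then have "det (bordered_minor k r c i j M) = - (M $$ (i,j) * det (submat k r c M))"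
    by (simp add: det_submat_border eq_neg_iff_add_eq_0)
  then show ?thesis using det_submat_bases_nonzero[OF M row_basis col_basis r c] by simp
qed

section \<open>Functions that are polynomials on a set\<close>

interpretation fun_space: Vector_Spaces.vector_space "\<lambda>(c::'a::field) (f::'b \<Rightarrow> 'a) x. c * f x"
  by unfold_locales (auto simp: fun_eq_iff algebra_simps)

lemma sum_fun_apply: "(\<Sum>a\<in>A. f a) x = (\<Sum>a\<in>A. f a x :: 'a::comm_monoid_add)"
  by (induction A rule: infinite_finite_induct) auto

definition monomial_fun :: "('v \<Rightarrow> 'b \<Rightarrow> 'a::comm_semiring_1) \<Rightarrow> 'v set \<Rightarrow> ('v \<Rightarrow> nat) \<Rightarrow> 'b \<Rightarrow> 'a" where
  "monomial_fun x U e = (\<lambda>w. \<Prod>u\<in>U. x u w ^ e u)"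

text \<open>Polynomials are represented by the functions they define: x u w is the value of the
  variable u at the point w, and the degree is bounded by D in each variable separately.\<close>

definition poly_funs :: "('v \<Rightarrow> 'b \<Rightarrow> 'a::field) \<Rightarrow> 'v set \<Rightarrow> nat \<Rightarrow> ('b \<Rightarrow> 'a) set" where
  "poly_funs x U D = fun_space.span (monomial_fun x U ` (U \<rightarrow>\<^sub>E {..D}))"

definition poly_on :: "('v \<Rightarrow> 'b \<Rightarrow> 'a::field) \<Rightarrow> 'v set \<Rightarrow> nat \<Rightarrow> 'b set \<Rightarrow> ('b \<Rightarrow> 'a) \<Rightarrow> bool" where
  "poly_on x U D W f \<longleftrightarrow> (\<exists>g\<in>poly_funs x U D. \<forall>w\<in>W. f w = g w)"

lemma card_monomial_funs_le:
  assumes "finite U"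
  shows "card (monomial_fun x U ` (U \<rightarrow>\<^sub>E {..D})) \<le> (D + 1) ^ card U"
  using card_image_le[of "U \<rightarrow>\<^sub>E {..D}" "monomial_fun x U"] assms
  by (simp add: finite_PiE card_funcsetE)

lemma monomial_fun_mult:
  "monomial_fun x U e * monomial_fun x U e' = monomial_fun x U (restrict (\<lambda>u. e u + e' u) U)"
  by (auto simp: monomial_fun_def fun_eq_iff power_add prod.distrib intro!: prod.cong)

lemma span_mult_closed:
  fixes S T P :: "('b \<Rightarrow> 'a::field) set"
  assumes "\<And>f g. f \<in> S \<Longrightarrow> g \<in> T \<Longrightarrow> f * g \<in> fun_space.span P"
    and "f \<in> fun_space.span S" and "g \<in> fun_space.span T"
  shows "f * g \<in> fun_space.span P"
proof -
  have right: "f * g \<in> fun_space.span P" if f: "f \<in> S" and g: "g \<in> fun_space.span T" for f g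
  proof -
    have "fun_space.subspace {g. f * g \<in> fun_space.span P}"
    proof (rule fun_space.subspaceI)
      fix c g assume "g \<in> {g. f * g \<in> fun_space.span P}"
      then have "(\<lambda>x. c * (f * g) x) \<in> fun_space.span P" using fun_space.span_scale by blast
      moreover have "f * (\<lambda>x. c * g x) = (\<lambda>x. c * (f * g) x)" by (auto simp: fun_eq_iff)
      ultimately show "(\<lambda>x. c * g x) \<in> {g. f * g \<in> fun_space.span P}" by simp
    qed (auto simp: distrib_left fun_space.span_add fun_space.span_zero)
    then show ?thesis using fun_space.span_induct[OF g] assms(1)[OF f] by blast
  qed
  have "fun_space.subspace {f. f * g \<in> fun_space.span P}"
  proof (rule fun_space.subspaceI)
    fix c f assume "f \<in> {f. f * g \<in> fun_space.span P}"
    then have "(\<lambda>x. c * (f * g) x) \<in> fun_space.span P" using fun_space.span_scale by blast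
    moreover have "(\<lambda>x. c * f x) * g = (\<lambda>x. c * (f * g) x)" by (auto simp: fun_eq_iff)
    ultimately show "(\<lambda>x. c * f x) \<in> {f. f * g \<in> fun_space.span P}" by simp
  qed (auto simp: distrib_right fun_space.span_add fun_space.span_zero)
  then show ?thesis using fun_space.span_induct[OF assms(2)] right assms(3) by blast
qed

lemma poly_funs_mult:
  assumes "f \<in> poly_funs x U D1" and "g \<in> poly_funs x U D2"
  shows "f * g \<in> poly_funs x U (D1 + D2)"
  using assms unfolding poly_funs_def
proof (rule span_mult_closed[rotated])
  fix f g assume "f \<in> monomial_fun x U ` (U \<rightarrow>\<^sub>E {..D1})" "g \<in> monomial_fun x U ` (U \<rightarrow>\<^sub>E {..D2})"
  then obtain e e' where e: "e \<in> U \<rightarrow>\<^sub>E {..D1}" "e' \<in> U \<rightarrow>\<^sub>E {..D2}"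
    and fg: "f = monomial_fun x U e" "g = monomial_fun x U e'" by blast
  have "restrict (\<lambda>u. e u + e' u) U \<in> U \<rightarrow>\<^sub>E {..D1 + D2}"
    using e by (auto simp: PiE_def Pi_def add_mono)
  then show "f * g \<in> fun_space.span (monomial_fun x U ` (U \<rightarrow>\<^sub>E {..D1 + D2}))"
    unfolding fg monomial_fun_mult by (intro fun_space.span_base imageI)
qed

lemma poly_on_mult:
  assumes "poly_on x U D1 W f" and "poly_on x U D2 W g"
  shows "poly_on x U (D1 + D2) W (\<lambda>w. f w * g w)"
proof -
  obtain f' g' where "f' \<in> poly_funs x U D1" "g' \<in> poly_funs x U D2"
    and "\<forall>w\<in>W. f w = f' w" "\<forall>w\<in>W. g w = g' w"
    using assms unfolding poly_on_def by blast
  then have "f' * g' \<in> poly_funs x U (D1 + D2)" "\<forall>w\<in>W. f w * g w = (f' * g') w"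
    by (simp_all add: poly_funs_mult)
  then show ?thesis unfolding poly_on_def by blast
qed

lemma poly_on_monomial_fun:
  assumes "e \<in> U \<rightarrow>\<^sub>E {..D}"
  shows "poly_on x U D W (monomial_fun x U e)"
proof -
  have "monomial_fun x U e \<in> poly_funs x U D"
    unfolding poly_funs_def using assms by (intro fun_space.span_base imageI)
  then show ?thesis unfolding poly_on_def by blast
qed

lemma poly_on_one: "poly_on x U D W (\<lambda>_. 1)"
proof -
  have "monomial_fun x U (\<lambda>u\<in>U. 0) = (\<lambda>_. 1)"
    by (auto simp: monomial_fun_def fun_eq_iff)
  then show ?thesis using poly_on_monomial_fun[of "\<lambda>u\<in>U. 0" U D x W] by auto
qed

lemma poly_on_var:
  assumes "finite U" and "u \<in> U" and "1 \<le> D"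
  shows "poly_on x U D W (x u)"
proof -
  let ?e = "\<lambda>v\<in>U. if v = u then 1 else 0"
  have "monomial_fun x U ?e = x u"
  proof
    fix w
    have "monomial_fun x U ?e w = (\<Prod>v\<in>U. if v = u then x v w else 1)"
      unfolding monomial_fun_def by (rule prod.cong) auto
    then show "monomial_fun x U ?e w = x u w" using assms by (simp add: prod.delta)
  qed
  then show ?thesis using poly_on_monomial_fun[of ?e U D x W] assms by auto
qed

lemma poly_on_vanishing:
  assumes "\<And>w. w \<in> W \<Longrightarrow> f w = 0"
  shows "poly_on x U D W f"
  using assms fun_space.span_zero unfolding poly_on_def poly_funs_def by (intro bexI[of _ 0]) auto

lemma poly_on_prod:
  assumes "finite A" and "\<And>a. a \<in> A \<Longrightarrow> poly_on x U d W (F a)"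
  shows "poly_on x U (card A * d) W (\<lambda>w. \<Prod>a\<in>A. F a w)"
  using assms
proof (induction A rule: finite_induct)
  case empty
  then show ?case using poly_on_one by simp
next
  case (insert a A)
  then have "poly_on x U (d + card A * d) W (\<lambda>w. F a w * (\<Prod>a\<in>A. F a w))"
    by (intro poly_on_mult) auto
  with insert show ?case by simp
qed

lemma poly_on_lincomb:
  assumes "\<And>p. p \<in> P \<Longrightarrow> poly_on x U d W (F p)"
  shows "poly_on x U d W (\<lambda>w. \<Sum>p\<in>P. c p * F p w)"
proof -
  have "\<forall>p\<in>P. \<exists>g. g \<in> poly_funs x U d \<and> (\<forall>w\<in>W. F p w = g w)"
    using assms unfolding poly_on_def by blast
  then obtain g where g: "\<And>p. p \<in> P \<Longrightarrow> g p \<in> poly_funs x U d \<and> (\<forall>w\<in>W. F p w = g p w)"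
    by metis
  have "(\<Sum>p\<in>P. (\<lambda>w. c p * g p w)) \<in> poly_funs x U d"
    using g unfolding poly_funs_def by (intro fun_space.span_sum fun_space.span_scale) auto
  moreover have "(\<Sum>p\<in>P. c p * F p w) = (\<Sum>p\<in>P. (\<lambda>w. c p * g p w)) w" if "w \<in> W" for w
    using g that by (simp add: sum_fun_apply)
  ultimately show ?thesis unfolding poly_on_def by blast
qed

lemma poly_on_det:
  assumes carrier: "\<And>w. A w \<in> carrier_mat m m"
    and entries: "\<And>a b. a < m \<Longrightarrow> b < m \<Longrightarrow> poly_on x U d W (\<lambda>w. A w $$ (a,b))"
  shows "poly_on x U (m * d) W (\<lambda>w. det (A w))"
proof -
  have "poly_on x U (card {0..<m} * d) W (\<lambda>w. \<Prod>a = 0..<m. A w $$ (a, \<pi> a))"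
    if "\<pi> permutes {0..<m}" for \<pi>
    using permutes_in_image[OF that] by (intro poly_on_prod entries) auto
  then have "poly_on x U (m * d) W
      (\<lambda>w. \<Sum>\<pi> | \<pi> permutes {0..<m}. of_int (sign \<pi>) * (\<Prod>a = 0..<m. A w $$ (a, \<pi> a)))"
    by (intro poly_on_lincomb) simp
  then show ?thesis by (simp add: det_def'[OF carrier])
qed

lemma fun_space_independent_if_separated:
  fixes V :: "('b \<Rightarrow> 'a::field) set"
  assumes "\<And>v. v \<in> V \<Longrightarrow> \<exists>w. v w \<noteq> 0 \<and> (\<forall>v'\<in>V - {v}. v' w = 0)"
  shows "fun_space.independent V"
proof
  assume "fun_space.dependent V"
  then obtain t u v where t: "finite t" "t \<subseteq> V" "(\<Sum>v\<in>t. (\<lambda>x. u v * v x)) = 0"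
    and v: "v \<in> t" "u v \<noteq> 0"
    unfolding fun_space.dependent_explicit by blast
  obtain w where w: "v w \<noteq> 0" "\<forall>v'\<in>V - {v}. v' w = 0" using assms v t by blast
  have "0 = (\<Sum>v'\<in>t. (\<lambda>x. u v' * v' x)) w" using t by simp
  also have "\<dots> = (\<Sum>v'\<in>t. u v' * v' w)" by (rule sum_fun_apply)
  also have "\<dots> = u v * v w"
    using w t by (intro sum.remove[OF t(1) v(1), THEN trans]) (auto intro!: sum.neutral)
  finally show False using v w by simp
qed

lemma card_supports_le_by_poly_on:
  fixes f :: "'p \<Rightarrow> 'b \<Rightarrow> 'a::field" and supp :: "'b \<Rightarrow> 'p set"
  assumes U: "finite U"
    and supp: "\<And>w. w \<in> X \<Longrightarrow> finite (supp w) \<and> card (supp w) = s"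
    and f: "\<And>w p. w \<in> X \<Longrightarrow> f p w \<noteq> 0 \<longleftrightarrow> p \<in> supp w"
    and poly: "\<And>w p. w \<in> X \<Longrightarrow> p \<in> supp w \<Longrightarrow> poly_on x U d X (f p)"
  shows "card (supp ` X) \<le> (s * d + 1) ^ card U"
proof -
  have "poly_on x U (s * d) X (\<lambda>w. \<Prod>p\<in>\<sigma>. f p w)" if "\<sigma> \<in> supp ` X" for \<sigma>
    using that supp poly poly_on_prod[of \<sigma> x U d X f] by auto
  then obtain g where g: "\<And>\<sigma>. \<sigma> \<in> supp ` X \<Longrightarrow>
      g \<sigma> \<in> poly_funs x U (s * d) \<and> (\<forall>w\<in>X. (\<Prod>p\<in>\<sigma>. f p w) = g \<sigma> w)"
    unfolding poly_on_def by metis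
  have g_nonzero: "g \<sigma> w \<noteq> 0 \<longleftrightarrow> \<sigma> = supp w" if \<sigma>: "\<sigma> \<in> supp ` X" and w: "w \<in> X" for \<sigma> w
  proof -
    have "finite \<sigma>" "card \<sigma> = card (supp w)" using \<sigma> w supp by auto
    then have "\<sigma> \<subseteq> supp w \<longleftrightarrow> \<sigma> = supp w"
      using card_subset_eq supp[OF w] by blast
    moreover have "g \<sigma> w = (\<Prod>p\<in>\<sigma>. f p w)" using g[OF \<sigma>] w by simp
    then have "g \<sigma> w \<noteq> 0 \<longleftrightarrow> \<sigma> \<subseteq> supp w"
      using f[OF w] \<open>finite \<sigma>\<close> by (auto simp: prod_zero_iff)
    ultimately show ?thesis by simp
  qed
  have inj: "inj_on g (supp ` X)"
    using g_nonzero by (intro inj_onI) (metis imageE)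
  have "fun_space.independent (g ` supp ` X)"
  proof (rule fun_space_independent_if_separated)
    fix v assume "v \<in> g ` supp ` X"
    then obtain w where w: "w \<in> X" "v = g (supp w)" by blast
    then show "\<exists>w. v w \<noteq> 0 \<and> (\<forall>v'\<in>g ` supp ` X - {v}. v' w = 0)"
      using g_nonzero by (intro exI[of _ w]) auto
  qed
  moreover have "g ` supp ` X \<subseteq> fun_space.span (monomial_fun x U ` (U \<rightarrow>\<^sub>E {..s * d}))"
    using g unfolding poly_funs_def by blast
  moreover have "finite (monomial_fun x U ` (U \<rightarrow>\<^sub>E {..s * d}))"
    using U by (simp add: finite_PiE)
  ultimately have "card (g ` supp ` X) \<le> card (monomial_fun x U ` (U \<rightarrow>\<^sub>E {..s * d}))"
    using fun_space.independent_span_bound by blast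
  also have "\<dots> \<le> (s * d + 1) ^ card U" by (rule card_monomial_funs_le[OF U])
  finally show ?thesis by (simp add: card_image[OF inj])
qed

section \<open>Counting supports of matrices\<close>

definition nonzero_positions :: "'a::zero mat \<Rightarrow> (nat \<times> nat) set" where
  "nonzero_positions M = {(i,j). i < dim_row M \<and> j < dim_col M \<and> M $$ (i,j) \<noteq> 0}"

definition cross_positions :: "nat \<Rightarrow> nat set \<Rightarrow> nat set \<Rightarrow> (nat \<times> nat) set" where
  "cross_positions n I J = {(i,j). i < n \<and> j < n \<and> (i \<in> I \<or> j \<in> J)}"

lemma nonzero_positions_subset: "nonzero_positions M \<subseteq> {..<dim_row M} \<times> {..<dim_col M}"
  by (auto simp: nonzero_positions_def)

lemma finite_nonzero_positions: "finite (nonzero_positions M)"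
  using nonzero_positions_subset by (rule finite_subset) simp

lemma card_nonzero_positions: "card (nonzero_positions M) = nnz_mat M"
  by (simp add: nonzero_positions_def nnz_mat_def)

lemma nnz_mat_le_square:
  assumes "M \<in> carrier_mat n n"
  shows "nnz_mat M \<le> n * n"
proof -
  have "card (nonzero_positions M) \<le> card ({..<n} \<times> {..<n})"
    using nonzero_positions_subset[of M] assms by (intro card_mono) auto
  then show ?thesis by (simp add: card_nonzero_positions card_cartesian_product)
qed

lemma finite_cross_positions: "finite (cross_positions n I J)"
  by (rule finite_subset[of _ "{..<n} \<times> {..<n}"]) (auto simp: cross_positions_def)

lemma card_zero_patterns_le:
  assumes "\<And>M. M \<in> X \<Longrightarrow> M \<in> carrier_mat n n"
  shows "card (zero_pattern ` X) \<le> card (nonzero_positions ` X)"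
proof -
  have "zero_pattern M = mat n n (\<lambda>p. p \<in> nonzero_positions M)" if "M \<in> X" for M
    using assms[OF that] by (intro eq_matI) (auto simp: zero_pattern_def nonzero_positions_def)
  then have "zero_pattern ` X = (\<lambda>\<sigma>. mat n n (\<lambda>p. p \<in> \<sigma>)) ` nonzero_positions ` X"
    by (simp add: image_image cong: image_cong)
  moreover have "finite (nonzero_positions ` X)"
  proof (rule finite_subset)
    show "nonzero_positions ` X \<subseteq> Pow ({..<n} \<times> {..<n})"
      using assms nonzero_positions_subset by blast
  qed simp
  ultimately show ?thesis by (simp add: card_image_le)
qed

lemma card_nonzero_positions_le_pow:
  assumes "\<And>M. M \<in> X \<Longrightarrow> M \<in> carrier_mat n n \<and> nnz_mat M = s"
  shows "card (nonzero_positions ` X) \<le> (n * n) ^ s"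
proof -
  let ?Sq = "{..<n} \<times> {..<n}"
  have "nonzero_positions ` X \<subseteq> {\<sigma>. \<sigma> \<subseteq> ?Sq \<and> card \<sigma> = s}"
    using assms nonzero_positions_subset card_nonzero_positions by fastforce
  then have "card (nonzero_positions ` X) \<le> card ?Sq choose s"
    using card_mono[of "{\<sigma>. \<sigma> \<subseteq> ?Sq \<and> card \<sigma> = s}"] by (simp add: n_subsets)
  also have "\<dots> \<le> (n * n) ^ s"
    by (cases "s \<le> n * n") (simp_all add: card_cartesian_product binomial_le_pow binomial_eq_0)
  finally show ?thesis .
qed

lemma poly_on_entry:
  fixes X :: "'a::field mat set"
  assumes U: "finite U" and vanish: "\<And>M. M \<in> X \<Longrightarrow> q \<notin> U \<Longrightarrow> M $$ q = 0"
  shows "poly_on (\<lambda>q M. M $$ q) U 1 X (\<lambda>M. M $$ q)"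
proof (cases "q \<in> U")
  case True
  then show ?thesis using poly_on_var[OF U, of q 1 "\<lambda>q M. M $$ q" X] by simp
qed (use vanish in \<open>auto intro: poly_on_vanishing\<close>)

lemma poly_on_det_bordered_minor:
  fixes X :: "'a::field mat set"
  assumes U: "finite U"
    and vanish: "\<And>M q. M \<in> X \<Longrightarrow> q \<in> cross_positions n I J \<Longrightarrow> q \<notin> U \<Longrightarrow> M $$ q = 0"
    and r: "\<And>a. a < k \<Longrightarrow> r a \<in> I" and c: "\<And>b. b < k \<Longrightarrow> c b \<in> J"
    and I: "I \<subseteq> {..<n}" and J: "J \<subseteq> {..<n}" and i: "i < n" and j: "j < n"
  shows "poly_on (\<lambda>q M. M $$ q) U (Suc k) X (\<lambda>M. det (bordered_minor k r c i j M))"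
proof -
  have "poly_on (\<lambda>q M. M $$ q) U (Suc k * 1) X (\<lambda>M. det (bordered_minor k r c i j M))"
  proof (rule poly_on_det)
    fix a b assume ab: "a < Suc k" "b < Suc k"
    show "poly_on (\<lambda>q M. M $$ q) U 1 X (\<lambda>M. bordered_minor k r c i j M $$ (a, b))"
    proof (cases "a = k \<and> b = k")
      case True
      then show ?thesis by (intro poly_on_vanishing) (simp add: bordered_minor_def)
    next
      case False
      let ?q = "((r(k := i)) a, (c(k := j)) b)"
      have q: "?q \<in> cross_positions n I J"
        using False ab r c I J i j by (auto simp: cross_positions_def subset_iff)
      have "(\<lambda>M :: 'a mat. bordered_minor k r c i j M $$ (a, b)) = (\<lambda>M. M $$ ?q)"
        using False ab by (auto simp: bordered_minor_def)
      moreover have "poly_on (\<lambda>q M. M $$ q) U 1 X (\<lambda>M. M $$ ?q)"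
        by (rule poly_on_entry[OF U]) (rule vanish[OF _ q])
      ultimately show ?thesis by (simp only:)
    qed
  qed simp
  then show ?thesis by simp
qed

lemma card_nonzero_positions_fixed_bases:
  fixes X :: "'a::field mat set"
  assumes U: "finite U" and I: "card I = k" and J: "card J = k"
    and X: "\<And>M. M \<in> X \<Longrightarrow> M \<in> carrier_mat n n \<and> nnz_mat M = s
        \<and> vec_space.is_row_basis n M I \<and> vec_space.is_col_basis n M J
        \<and> nonzero_positions M \<inter> cross_positions n I J \<subseteq> U"
  shows "card (nonzero_positions ` X) \<le> (s * (k + 1) + 1) ^ card U"
proof (cases "X = {}")
  case False
  then obtain M0 where "M0 \<in> X" by blast
  then have "M0 \<in> carrier_mat n n" "vec_space.is_row_basis n M0 I" "vec_space.is_col_basis n M0 J"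
    using X by auto
  then have sub: "I \<subseteq> {..<n}" "J \<subseteq> {..<n}"
    unfolding vec_space.is_row_basis_def vec_space.is_col_basis_def by auto
  then obtain r c where r: "bij_betw r {..<k} I" and c: "bij_betw c {..<k} J"
    using ex_bij_betw_nat_finite I J finite_subset lessThan_atLeast0 by (metis finite_lessThan)
  have vanish: "M $$ q = 0" if "M \<in> X" "q \<in> cross_positions n I J" "q \<notin> U" for M q
  proof -
    have "q \<notin> nonzero_positions M" using X that by blast
    then show ?thesis using X[OF \<open>M \<in> X\<close>] \<open>q \<in> cross_positions n I J\<close>
      by (auto simp: nonzero_positions_def cross_positions_def)
  qed
  define f where "f p M = (if fst p < n \<and> snd p < n
      then det (bordered_minor k r c (fst p) (snd p) M) else 0)" for p and M :: "'a mat"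
  show ?thesis
  proof (rule card_supports_le_by_poly_on[OF U])
    fix M assume "M \<in> X"
    then show "finite (nonzero_positions M) \<and> card (nonzero_positions M) = s"
      using X finite_nonzero_positions card_nonzero_positions by blast
  next
    fix M p assume "M \<in> X"
    then have M: "M \<in> carrier_mat n n" "vec_space.is_row_basis n M I" "vec_space.is_col_basis n M J"
      using X by auto
    show "f p M \<noteq> 0 \<longleftrightarrow> p \<in> nonzero_positions M"
      using entry_nonzero_iff_det_bordered_minor[OF M r c] M(1)
      by (cases p) (auto simp: f_def nonzero_positions_def)
  next
    fix M p assume "M \<in> X" and p: "p \<in> nonzero_positions M"
    then have "M \<in> carrier_mat n n" using X by blast
    with p obtain i j where ij: "p = (i,j)" "i < n" "j < n"
      by (auto simp: nonzero_positions_def)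
    then have "f p = (\<lambda>M. det (bordered_minor k r c i j M))"
      by (simp add: f_def fun_eq_iff)
    moreover have "poly_on (\<lambda>q M. M $$ q) U (Suc k) X (\<lambda>M. det (bordered_minor k r c i j M))"
      using bij_betwE[OF r] bij_betwE[OF c] sub ij
      by (intro poly_on_det_bordered_minor[where I=I and J=J, OF U vanish]) auto
    ultimately show "poly_on (\<lambda>q M. M $$ q) U (k + 1) X (f p)" by simp
  qed
qed simp

lemma card_nonzero_positions_inter_cross_le:
  assumes M: "M \<in> carrier_mat n n" and I: "I \<subseteq> {..<n}" and J: "J \<subseteq> {..<n}"
  shows "card (nonzero_positions M \<inter> cross_positions n I J)
           \<le> (\<Sum>i\<in>I. nnz_vec (row M i)) + (\<Sum>j\<in>J. nnz_vec (col M j))"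
proof -
  define R where "R i = {i} \<times> {j. j < n \<and> M $$ (i,j) \<noteq> 0}" for i
  define C where "C j = {i. i < n \<and> M $$ (i,j) \<noteq> 0} \<times> {j}" for j
  have fin: "finite I" "finite J" using I J finite_subset by auto
  have "nonzero_positions M \<inter> cross_positions n I J \<subseteq> (\<Union>i\<in>I. R i) \<union> (\<Union>j\<in>J. C j)"
    using M by (auto simp: nonzero_positions_def cross_positions_def R_def C_def)
  then have "card (nonzero_positions M \<inter> cross_positions n I J) \<le> card ((\<Union>i\<in>I. R i) \<union> (\<Union>j\<in>J. C j))"
    by (rule card_mono[rotated]) (simp add: fin R_def C_def)
  also have "\<dots> \<le> (\<Sum>i\<in>I. card (R i)) + (\<Sum>j\<in>J. card (C j))"
    using fin by (intro card_Un_le[THEN order_trans] add_mono card_UN_le)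
  also have "(\<Sum>i\<in>I. card (R i)) = (\<Sum>i\<in>I. nnz_vec (row M i))"
    using I M by (intro sum.cong) (auto simp: R_def card_cartesian_product_singleton nnz_vec_def
        cong: conj_cong)
  also have "(\<Sum>j\<in>J. card (C j)) = (\<Sum>j\<in>J. nnz_vec (col M j))"
    using J M by (intro sum.cong) (auto simp: C_def card_cartesian_product nnz_vec_def
        cong: conj_cong)
  finally show ?thesis .
qed

lemma card_cross_positions_le:
  assumes "I \<subseteq> {..<n}" and "J \<subseteq> {..<n}"
  shows "card (cross_positions n I J) \<le> card I * n + n * card J"
proof -
  have fin: "finite I" "finite J" using assms finite_subset by auto
  have "cross_positions n I J \<subseteq> I \<times> {..<n} \<union> {..<n} \<times> J"
    by (auto simp: cross_positions_def)
  then have "card (cross_positions n I J) \<le> card (I \<times> {..<n} \<union> {..<n} \<times> J)"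
    by (rule card_mono[rotated]) (simp add: fin)
  also have "\<dots> \<le> card (I \<times> {..<n}) + card ({..<n} \<times> J)" by (rule card_Un_le)
  finally show ?thesis by (simp add: card_cartesian_product)
qed

lemma card_subsets_card_le:
  assumes B: "finite B"
  shows "card {U. U \<subseteq> B \<and> card U \<le> T} \<le> (card B + 1) ^ T"
proof (induction T)
  case 0
  have "{U. U \<subseteq> B \<and> card U \<le> 0} = {{}}"
    using B by (auto simp: card_eq_0_iff dest: rev_finite_subset[OF B])
  then show ?case by simp
next
  case (Suc T)
  let ?S = "\<lambda>T. {U. U \<subseteq> B \<and> card U \<le> T}"
  have fin: "finite (?S T)" by (rule finite_subset[of _ "Pow B"]) (use B in auto)
  have "?S (Suc T) \<subseteq> ?S T \<union> (\<Union>b\<in>B. insert b ` ?S T)"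
  proof
    fix U assume U: "U \<in> ?S (Suc T)"
    show "U \<in> ?S T \<union> (\<Union>b\<in>B. insert b ` ?S T)"
    proof (cases "U = {}")
      case False
      then obtain b where b: "b \<in> U" by blast
      have "U - {b} \<in> ?S T" using U b B by (auto simp: finite_subset)
      moreover have "U = insert b (U - {b})" using b by blast
      ultimately have "U \<in> insert b ` ?S T" by (rule rev_image_eqI)
      then show ?thesis using U b by blast
    qed simp
  qed
  then have "card (?S (Suc T)) \<le> card (?S T \<union> (\<Union>b\<in>B. insert b ` ?S T))"
    by (rule card_mono[rotated]) (simp add: B fin)
  also have "\<dots> \<le> card (?S T) + card (\<Union>b\<in>B. insert b ` ?S T)" by (rule card_Un_le)
  also have "\<dots> \<le> card (?S T) + (\<Sum>b\<in>B. card (insert b ` ?S T))"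
    using card_UN_le[OF B] by simp
  also have "\<dots> \<le> card (?S T) + card B * card (?S T)"
    using sum_bounded_above[of B "\<lambda>b. card (insert b ` ?S T)" "card (?S T)"] card_image_le[OF fin]
    by fastforce
  also have "\<dots> = (card B + 1) * card (?S T)" by simp
  also have "\<dots> \<le> (card B + 1) * (card B + 1) ^ T" using Suc.IH by (rule mult_left_mono) simp
  finally show ?case by simp
qed

definition cross_triples :: "nat \<Rightarrow> nat \<Rightarrow> nat \<Rightarrow> (nat set \<times> nat set \<times> (nat \<times> nat) set) set" where
  "cross_triples n k T = (SIGMA I:{I. I \<subseteq> {..<n} \<and> card I = k}. SIGMA J:{J. J \<subseteq> {..<n} \<and> card J = k}.
     {U. U \<subseteq> cross_positions n I J \<and> card U \<le> T})"

definition nks_with_bases :: "nat \<Rightarrow> nat \<Rightarrow> nat \<Rightarrow> nat set \<times> nat set \<times> (nat \<times> nat) set \<Rightarrow> 'a::field mat set"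
  where "nks_with_bases n k s t = (case t of (I, J, U) \<Rightarrow> {M. nks_matrix n k s M
     \<and> vec_space.is_row_basis n M I \<and> vec_space.is_col_basis n M J
     \<and> nonzero_positions M \<inter> cross_positions n I J \<subseteq> U})"

lemma finite_cross_triples: "finite (cross_triples n k T)"
  by (rule finite_subset[of _ "Pow {..<n} \<times> Pow {..<n} \<times> Pow ({..<n} \<times> {..<n})"])
    (auto simp: cross_triples_def cross_positions_def)

lemma card_cross_triples_le: "card (cross_triples n k T) \<le> (n choose k)^2 * (2 * k * n + 1) ^ T"
proof -
  let ?K = "{I. I \<subseteq> {..<n} \<and> card I = k}"
  let ?U = "\<lambda>I J. {U. U \<subseteq> cross_positions n I J \<and> card U \<le> T}"
  have bound: "card (?U I J) \<le> (2 * k * n + 1) ^ T" if "I \<in> ?K" "J \<in> ?K" for I J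
  proof -
    have "card (?U I J) \<le> (card (cross_positions n I J) + 1) ^ T"
      by (rule card_subsets_card_le[OF finite_cross_positions])
    also have "\<dots> \<le> (2 * k * n + 1) ^ T"
    proof -
      have "card (cross_positions n I J) \<le> k * n + n * k"
        using card_cross_positions_le[of I n J] that by simp
      then show ?thesis by (intro power_mono) (auto simp: algebra_simps)
    qed
    finally show ?thesis .
  qed
  have "finite ?K" "finite (?U I J)" for I J
    using finite_cross_positions by (auto intro: finite_subset[of _ "Pow _"])
  then have "card (cross_triples n k T) = (\<Sum>I\<in>?K. \<Sum>J\<in>?K. card (?U I J))"
    by (simp add: cross_triples_def card_SigmaI)
  also have "\<dots> \<le> (\<Sum>I\<in>?K. \<Sum>J\<in>?K. (2 * k * n + 1) ^ T)"
    using bound by (intro sum_mono) auto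
  also have "\<dots> = (n choose k)^2 * (2 * k * n + 1) ^ T"
    by (simp add: n_subsets power2_eq_square)
  finally show ?thesis .
qed

lemma nks_matrix_in_nks_with_bases:
  fixes M :: "'a::field mat"
  assumes "nks_matrix n k s M"
  shows "\<exists>t\<in>cross_triples n k (nat \<lfloor>4 * real k * real s / real n\<rfloor>). M \<in> nks_with_bases n k s t"
proof -
  obtain I J where IJ: "card I = k" "card J = k"
    and bases: "vec_space.is_row_basis n M I" "vec_space.is_col_basis n M J"
    and sparse: "real ((\<Sum>i\<in>I. nnz_vec (row M i)) + (\<Sum>j\<in>J. nnz_vec (col M j)))
                   \<le> 4 * real k * real s / real n"
    and M: "M \<in> carrier_mat n n"
    using assms unfolding nks_matrix_def by blast
  have sub: "I \<subseteq> {..<n}" "J \<subseteq> {..<n}"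
    using bases M unfolding vec_space.is_row_basis_def vec_space.is_col_basis_def by auto
  let ?U = "nonzero_positions M \<inter> cross_positions n I J"
  have "real (card ?U) \<le> 4 * real k * real s / real n"
    using card_nonzero_positions_inter_cross_le[OF M sub] sparse by linarith
  then have "(I, J, ?U) \<in> cross_triples n k (nat \<lfloor>4 * real k * real s / real n\<rfloor>)"
    using sub IJ by (auto simp: cross_triples_def le_nat_floor)
  moreover have "M \<in> nks_with_bases n k s (I, J, ?U)"
    using assms bases by (simp add: nks_with_bases_def)
  ultimately show ?thesis by blast
qed

lemma card_nonzero_positions_nks_with_bases_le:
  assumes "t \<in> cross_triples n k T"
  shows "card (nonzero_positions ` (nks_with_bases n k s t :: 'a::field mat set))
           \<le> (s * (k + 1) + 1) ^ T"
proof -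
  obtain I J U where t: "t = (I, J, U)" and IJ: "card I = k" "card J = k"
    and U: "U \<subseteq> cross_positions n I J" "card U \<le> T"
    using assms by (auto simp: cross_triples_def)
  have "finite U" using U(1) finite_cross_positions by (rule finite_subset)
  then have "card (nonzero_positions ` (nks_with_bases n k s t :: 'a mat set)) \<le> (s * (k + 1) + 1) ^ card U"
    using IJ unfolding t nks_with_bases_def prod.case
    by (rule card_nonzero_positions_fixed_bases) (auto simp: nks_matrix_def)
  also have "\<dots> \<le> (s * (k + 1) + 1) ^ T" using U(2) by (intro power_increasing) auto
  finally show ?thesis .
qed

lemma card_nonzero_positions_nks_le:
  fixes n k s :: nat
  defines "T \<equiv> nat \<lfloor>4 * real k * real s / real n\<rfloor>"
  shows "card (nonzero_positions ` {M :: 'a::field mat. nks_matrix n k s M})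
           \<le> (n choose k)^2 * (2 * k * n + 1) ^ T * (s * (k + 1) + 1) ^ T"
proof -
  let ?cls = "\<lambda>t. nonzero_positions ` (nks_with_bases n k s t :: 'a mat set)"
  have "nonzero_positions ` {M :: 'a mat. nks_matrix n k s M} \<subseteq> (\<Union>t\<in>cross_triples n k T. ?cls t)"
  proof
    fix \<sigma> assume "\<sigma> \<in> nonzero_positions ` {M :: 'a mat. nks_matrix n k s M}"
    then obtain M :: "'a mat" where "nks_matrix n k s M" "\<sigma> = nonzero_positions M" by blast
    then show "\<sigma> \<in> (\<Union>t\<in>cross_triples n k T. ?cls t)"
      using nks_matrix_in_nks_with_bases[of n k s M] unfolding T_def by blast
  qed
  moreover have "finite (\<Union>t\<in>cross_triples n k T. ?cls t)"
    by (rule finite_subset[of _ "Pow ({..<n} \<times> {..<n})"])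
      (auto simp: nks_with_bases_def nonzero_positions_def nks_matrix_def)
  ultimately have "card (nonzero_positions ` {M :: 'a mat. nks_matrix n k s M})
      \<le> card (\<Union>t\<in>cross_triples n k T. ?cls t)"
    by (simp add: card_mono)
  also have "\<dots> \<le> (\<Sum>t\<in>cross_triples n k T. card (?cls t))"
    by (rule card_UN_le[OF finite_cross_triples])
  also have "\<dots> \<le> card (cross_triples n k T) * (s * (k + 1) + 1) ^ T"
    using sum_bounded_above[of "cross_triples n k T" "\<lambda>t. card (?cls t)" "(s * (k + 1) + 1) ^ T"]
      card_nonzero_positions_nks_with_bases_le[where 'a='a] by simp
  also have "\<dots> \<le> (n choose k)^2 * (2 * k * n + 1) ^ T * (s * (k + 1) + 1) ^ T"
    using card_cross_triples_le by (rule mult_right_mono) simp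
  finally show ?thesis .
qed

section \<open>Numerical estimates\<close>

lemma sparse_base_le_pow5:
  fixes n k s :: nat
  assumes "2 * k + 2 \<le> n" and "s \<le> n * n"
  shows "(2 * k * n + 1) * (s * (k + 1) + 1) \<le> n ^ 5"
proof -
  have "2 * k * n + 1 \<le> (2 * k + 1) * n" using assms(1) by (simp add: algebra_simps)
  also have "\<dots> \<le> n * n" using assms(1) by (intro mult_right_mono) auto
  finally have row: "2 * k * n + 1 \<le> n * n" .
  have "s * (k + 1) + 1 \<le> n * n * (n - 1) + 1"
    using assms by (intro add_mono mult_mono) auto
  also have "\<dots> \<le> n * n * n" using assms(1) by (cases n) (auto simp: algebra_simps)
  finally have col: "s * (k + 1) + 1 \<le> n * n * n" .
  have "(2 * k * n + 1) * (s * (k + 1) + 1) \<le> (n * n) * (n * n * n)"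
    using row col by (rule mult_mono) auto
  then show ?thesis by (simp add: eval_nat_numeral mult_ac)
qed

lemma sparse_factor_le_powr:
  fixes n k s T :: nat
  assumes sparse: "10 * k < n" and s: "s \<le> n * n" and T: "real T \<le> 4 * real k * real s / real n"
  shows "real ((2 * k * n + 1) ^ T * (s * (k + 1) + 1) ^ T) \<le> real n powr (20 * real k * real s / real n)"
proof (cases "k = 0")
  case True
  then show ?thesis using T sparse by simp
next
  case False
  have "(2 * k * n + 1) ^ T * (s * (k + 1) + 1) ^ T \<le> (n ^ 5) ^ T"
    unfolding power_mult_distrib[symmetric]
    using False sparse s by (intro power_mono sparse_base_le_pow5) auto
  then have "real ((2 * k * n + 1) ^ T * (s * (k + 1) + 1) ^ T) \<le> real n ^ (5 * T)"
    by (metis of_nat_le_iff of_nat_power power_mult)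
  also have "\<dots> = real n powr real (5 * T)"
    by (rule powr_realpow[symmetric]) (use sparse in simp)
  also have "\<dots> \<le> real n powr (20 * real k * real s / real n)"
    using T sparse by (intro powr_mono) auto
  finally show ?thesis .
qed

lemma dense_factor_le_powr:
  fixes n k s :: nat
  assumes dense: "n \<le> 10 * k" and n: "1 \<le> n"
  shows "real ((n * n) ^ s) \<le> real n powr (20 * real k * real s / real n)"
proof -
  have "real ((n * n) ^ s) = real n ^ (2 * s)"
    by (simp add: power_mult power2_eq_square)
  also have "\<dots> = real n powr real (2 * s)"
    by (rule powr_realpow[symmetric]) (use n in simp)
  also have "\<dots> \<le> real n powr (20 * real k * real s / real n)"
  proof (rule powr_mono)
    have "real n * real s \<le> 10 * real k * real s"
      using dense by (intro mult_right_mono) auto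
    then have "real n * real (2 * s) \<le> 20 * real k * real s" by simp
    then show "real (2 * s) \<le> 20 * real k * real s / real n"
      using n by (simp add: field_simps)
  qed (use n in simp)
  finally show ?thesis .
qed

lemma card_nonzero_positions_nks_sparse:
  fixes n k s :: nat
  assumes "10 * k < n"
  shows "real (card (nonzero_positions ` {M :: 'a::field mat. nks_matrix n k s M}))
           \<le> real (n choose k) ^ 2 * real n powr (20 * real k * real s / real n)"
proof (cases "{M :: 'a mat. nks_matrix n k s M} = {}")
  case False
  then obtain M :: "'a mat" where "nks_matrix n k s M" by blast
  then have s: "s \<le> n * n" using nnz_mat_le_square by (auto simp: nks_matrix_def)
  let ?T = "nat \<lfloor>4 * real k * real s / real n\<rfloor>"
  have "real (card (nonzero_positions ` {M :: 'a mat. nks_matrix n k s M}))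
      \<le> real (n choose k) ^ 2 * real ((2 * k * n + 1) ^ ?T * (s * (k + 1) + 1) ^ ?T)"
    using card_nonzero_positions_nks_le[of n k s, where 'a='a]
    by (simp only: mult.assoc flip: of_nat_le_iff of_nat_power of_nat_mult)
  also have "\<dots> \<le> real (n choose k) ^ 2 * real n powr (20 * real k * real s / real n)"
    using sparse_factor_le_powr[OF assms s] by (intro mult_left_mono) auto
  finally show ?thesis .
qed simp

lemma card_nonzero_positions_nks_dense:
  fixes n k s :: nat
  assumes "n \<le> 10 * k" and "1 \<le> n" and "k \<le> n"
  shows "real (card (nonzero_positions ` {M :: 'a::field mat. nks_matrix n k s M}))
           \<le> real (n choose k) ^ 2 * real n powr (20 * real k * real s / real n)"
proof -
  have "real (card (nonzero_positions ` {M :: 'a mat. nks_matrix n k s M})) \<le> real ((n * n) ^ s)"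
    unfolding of_nat_le_iff by (rule card_nonzero_positions_le_pow) (simp add: nks_matrix_def)
  also have "\<dots> \<le> real n powr (20 * real k * real s / real n)"
    using dense_factor_le_powr[OF assms(1,2)] .
  also have "\<dots> \<le> real (n choose k) ^ 2 * real n powr (20 * real k * real s / real n)"
  proof -
    have "1 \<le> real (n choose k) ^ 2"
      using assms(3) by (simp add: Suc_leI zero_less_binomial_iff)
    then show ?thesis using mult_right_mono[OF _ powr_ge_zero] by fastforce
  qed
  finally show ?thesis .
qed

theorem lemma2p3:
  fixes n k s :: nat
  assumes "n \<ge> 1" and "k \<le> n"
  shows "real (card {zero_pattern M | M :: 'a::field mat. nks_matrix n k s M})
           \<le> real (n choose k) ^ 2 * real n powr (20 * real k * real s / real n)"
proof -
  let ?N = "{M :: 'a mat. nks_matrix n k s M}"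
  have "card {zero_pattern M | M :: 'a mat. nks_matrix n k s M} \<le> card (nonzero_positions ` ?N)"
    unfolding setcompr_eq_image by (rule card_zero_patterns_le[of _ n]) (simp add: nks_matrix_def)
  moreover have "real (card (nonzero_positions ` ?N))
      \<le> real (n choose k) ^ 2 * real n powr (20 * real k * real s / real n)"
  proof (cases "10 * k < n")
    case True
    then show ?thesis by (rule card_nonzero_positions_nks_sparse)
  next
    case False
    then show ?thesis using assms by (intro card_nonzero_positions_nks_dense) auto
  qed
  ultimately show ?thesis by linarith
qed

end
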